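(* Let $A$ be a Banach algebra. If $A$ contains no subspace isomorphic to $\ell^1$, then $\mathrm{wpL}(A)=\mathrm{cc}(A)=\mathrm{ap}(A)$.
   Context: For a Banach algebra $A$, $f\in A^*$ and $a\in A$, define $fa,af\in A^*$ by $fa(x)=f(ax)$ and $af(x)=f(xa)$. The operators $T_f,S_f:A\to A^*$ are $T_f(a)=fa$, $S_f(a)=af$. A set $E\subseteq A^*$ is an L-set if for every weakly null sequence $(x_n)$ in $A$, $\lim_n\sup_{g\in E}|g(x_n)|=0$. A set is weakly precompact if every sequence in it has a weakly Cauchy subsequence. $\mathrm{wpL}(A)$ is the set of $f\in A^*$ such that $T_f$ maps weakly precompact sets onto L-sets; $\mathrm{lcc}(A)$ (resp. $\mathrm{rcc}(A)$) is the set of $f$ such that $T_f$ (resp. $S_f$) is completely continuous (maps weakly null sequences to norm null sequences); $\mathrm{cc}(A)=\mathrm{lcc}(A)\cap\mathrm{rcc}(A)$; $\mathrm{ap}(A)$ is the set of $f$ such that $T_f$ is compact. *)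

theory Defs
  imports "HOL-Analysis.Analysis"
begin

text \<open>Module actions: (f a)(x) = f(a x) and (a f)(x) = f(x a).\<close>
definition dual_lmod :: "('a::real_normed_algebra \<Rightarrow>\<^sub>L real) \<Rightarrow> 'a \<Rightarrow> ('a \<Rightarrow>\<^sub>L real)" where
  "dual_lmod f a = f o\<^sub>L blinfun_mult_right a"

definition dual_rmod :: "'a::real_normed_algebra \<Rightarrow> ('a \<Rightarrow>\<^sub>L real) \<Rightarrow> ('a \<Rightarrow>\<^sub>L real)" where
  "dual_rmod a f = f o\<^sub>L blinfun_mult_left a"

definition T_op :: "('a::real_normed_algebra \<Rightarrow>\<^sub>L real) \<Rightarrow> 'a \<Rightarrow> ('a \<Rightarrow>\<^sub>L real)" where
  "T_op f = (\<lambda>a. dual_lmod f a)"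

definition S_op :: "('a::real_normed_algebra \<Rightarrow>\<^sub>L real) \<Rightarrow> 'a \<Rightarrow> ('a \<Rightarrow>\<^sub>L real)" where
  "S_op f = (\<lambda>a. dual_rmod a f)"

definition weakly_null :: "(nat \<Rightarrow> 'a::real_normed_vector) \<Rightarrow> bool" where
  "weakly_null x \<longleftrightarrow> (\<forall>g::'a \<Rightarrow>\<^sub>L real. (\<lambda>n. g (x n)) \<longlonglongrightarrow> 0)"

definition weakly_cauchy :: "(nat \<Rightarrow> 'a::real_normed_vector) \<Rightarrow> bool" where
  "weakly_cauchy x \<longleftrightarrow> (\<forall>g::'a \<Rightarrow>\<^sub>L real. Cauchy (\<lambda>n. g (x n)))"

definition weakly_precompact :: "'a::real_normed_vector set \<Rightarrow> bool" where
  "weakly_precompact S \<longleftrightarrow>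
     (\<forall>x. (\<forall>n. x n \<in> S) \<longrightarrow> (\<exists>r::nat \<Rightarrow> nat. strict_mono r \<and> weakly_cauchy (x \<circ> r)))"

definition L_set :: "('a::real_normed_vector \<Rightarrow>\<^sub>L real) set \<Rightarrow> bool" where
  "L_set E \<longleftrightarrow> (\<forall>x. weakly_null x \<longrightarrow>
     (\<forall>e>0. \<forall>\<^sub>F n in sequentially. \<forall>g\<in>E. \<bar>g (x n)\<bar> \<le> e))"

definition completely_continuous :: "('a::real_normed_vector \<Rightarrow> 'b::real_normed_vector) \<Rightarrow> bool" where
  "completely_continuous T \<longleftrightarrow> (\<forall>x. weakly_null x \<longrightarrow> (\<lambda>n. T (x n)) \<longlonglongrightarrow> 0)"

definition compact_op :: "('a::real_normed_vector \<Rightarrow> 'b::real_normed_vector) \<Rightarrow> bool" where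
  "compact_op T \<longleftrightarrow> compact (closure (T ` ball 0 1))"

definition wpL :: "('a::real_normed_algebra \<Rightarrow>\<^sub>L real) set" where
  "wpL = {f. \<forall>Y::'a set. weakly_precompact Y \<longrightarrow> L_set (T_op f ` Y)}"

definition lcc :: "('a::real_normed_algebra \<Rightarrow>\<^sub>L real) set" where
  "lcc = {f. completely_continuous (T_op f)}"

definition rcc :: "('a::real_normed_algebra \<Rightarrow>\<^sub>L real) set" where
  "rcc = {f. completely_continuous (S_op f)}"

definition cc :: "('a::real_normed_algebra \<Rightarrow>\<^sub>L real) set" where
  "cc = lcc \<inter> rcc"

definition ap :: "('a::real_normed_algebra \<Rightarrow>\<^sub>L real) set" where
  "ap = {f. compact_op (T_op f)}"

text \<open>ell^1 = {a :: nat \<Rightarrow> real. summable |a|} with norm sum |a n|.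
  A contains a subspace isomorphic to ell^1 iff there is a linear map on ell^1
  into A that is an isomorphism onto its range.\<close>
definition contains_l1 :: "'a::real_normed_vector itself \<Rightarrow> bool" where
  "contains_l1 _ \<longleftrightarrow> (\<exists>(J::(nat \<Rightarrow> real) \<Rightarrow> 'a) c C. 0 < c \<and>
     (\<forall>a b. summable (\<lambda>n. \<bar>a n\<bar>) \<longrightarrow> summable (\<lambda>n. \<bar>b n\<bar>) \<longrightarrow> J (\<lambda>n. a n + b n) = J a + J b) \<and>
     (\<forall>a t. summable (\<lambda>n. \<bar>a n\<bar>) \<longrightarrow> J (\<lambda>n. t * a n) = t *\<^sub>R J a) \<and>
     (\<forall>a. summable (\<lambda>n. \<bar>a n\<bar>) \<longrightarrow>
        c * (\<Sum>n. \<bar>a n\<bar>) \<le> norm (J a) \<and> norm (J a) \<le> C * (\<Sum>n. \<bar>a n\<bar>)))"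

end

theory Submission
  imports Defs
begin

text \<open>
  Without a copy of l1 in A, Rosenthal's theorem makes the unit ball of A weakly precompact.
  Rosenthal's theorem is proved in combinatorial form: for a bounded sequence x and reals
  r < s, the pairs of sets of dual-ball functionals with g(x n) \<le> r, resp. s \<le> g(x n),
  either converge along a subsequence (no functional lies infinitely often in both) or are
  Boolean independent along a subsequence, and independence gives the lower l1 estimate
  (s - r)/2 \<Sum>|a i| \<le> \<parallel>\<Sum> a i x i\<parallel>. A diagonal argument over all rational gaps then
  produces a weakly Cauchy subsequence.

  The classes are compared through the identity (T_f a)(y) = f(a y) = (S_f y)(a):
  S_f is completely continuous iff T_f maps the unit ball onto an L-set; a relatively
  compact set of functionals is an L-set, because a weakly null sequence is uniformly
  bounded on the dual and converges uniformly on finite nets; and a completely continuous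
  operator maps weakly Cauchy sequences to norm Cauchy ones, so it is compact once the
  unit ball is weakly precompact. This gives ap \<subseteq> rcc \<subseteq> lcc \<subseteq> ap and wpL = rcc.
\<close>

section \<open>Uniform boundedness on the dual\<close>

lemma ball_in_level_set_if_weakly_bounded:
  fixes Y :: "'a::real_normed_vector set"
  assumes weakly_bounded: "\<And>g::('a \<Rightarrow>\<^sub>L real). \<exists>B. \<forall>a\<in>Y. \<bar>blinfun_apply g a\<bar> \<le> B"
  obtains k :: nat and g0 d where "d > 0" "ball g0 d \<subseteq> {g. \<forall>a\<in>Y. \<bar>blinfun_apply g a\<bar> \<le> real k}"
proof -
  define F where "F k = {g::'a \<Rightarrow>\<^sub>L real. \<forall>a\<in>Y. \<bar>g a\<bar> \<le> real k}" for k
  have "closed (F k)" for k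
  proof -
    have "F k = (\<Inter>a\<in>Y. {g. \<bar>blinfun_apply g a\<bar> \<le> real k})"
      by (auto simp: F_def)
    moreover have "closed {g::'a \<Rightarrow>\<^sub>L real. \<bar>g a\<bar> \<le> real k}" for a
      by (intro closed_Collect_le continuous_intros)
    ultimately show ?thesis by auto
  qed
  moreover have "\<Union>(range F) = UNIV"
  proof -
    have "g \<in> \<Union>(range F)" for g
    proof -
      obtain B where "\<forall>a\<in>Y. \<bar>g a\<bar> \<le> B" using weakly_bounded by blast
      moreover obtain k :: nat where "B \<le> real k" using real_arch_simple by blast
      ultimately have "g \<in> F k" unfolding F_def by (auto intro: order_trans)
      then show ?thesis by blast
    qed
    then show ?thesis by blast
  qed
  ultimately obtain k where "interior (F k) \<noteq> {}"
    using Baire_category_alt[of euclidean "range F"]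
    by (force simp: completely_metrizable_space_euclidean closed_closedin[symmetric])
  then obtain g0 d where "d > 0" and "ball g0 d \<subseteq> F k"
    by (metis ex_in_conv interior_subset open_contains_ball open_interior subset_trans)
  then have "ball g0 d \<subseteq> {g. \<forall>a\<in>Y. \<bar>blinfun_apply g a\<bar> \<le> real k}"
    by (simp add: F_def)
  with \<open>d > 0\<close> show thesis by (rule that)
qed

lemma uniformly_bounded_if_weakly_bounded:
  fixes Y :: "'a::real_normed_vector set"
  assumes weakly_bounded: "\<And>g::('a \<Rightarrow>\<^sub>L real). \<exists>B. \<forall>a\<in>Y. \<bar>blinfun_apply g a\<bar> \<le> B"
  shows "\<exists>M\<ge>0. \<forall>a\<in>Y. \<forall>g::('a \<Rightarrow>\<^sub>L real). \<bar>blinfun_apply g a\<bar> \<le> M * norm g"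
proof -
  obtain k :: nat and g0 d where d: "d > 0"
    and level: "ball g0 d \<subseteq> {g. \<forall>a\<in>Y. \<bar>blinfun_apply g a\<bar> \<le> real k}"
    by (rule ball_in_level_set_if_weakly_bounded[OF weakly_bounded])
  \<comment> \<open>a functional of norm d/2 is the difference of two points of that ball\<close>
  have "\<bar>g a\<bar> \<le> (4 * real k / d) * norm g" if "a \<in> Y" for a and g :: "'a \<Rightarrow>\<^sub>L real"
  proof (cases "g = 0")
    case False
    define h where "h = (d / 2 / norm g) *\<^sub>R g"
    have "g0 + h \<in> ball g0 d" "g0 \<in> ball g0 d"
      using d False by (auto simp: h_def dist_norm)
    then have "\<bar>(g0 + h) a\<bar> \<le> real k" "\<bar>g0 a\<bar> \<le> real k"
      using level that by blast+
    then have "\<bar>h a\<bar> \<le> 2 * real k" by (simp add: blinfun.add_left)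
    then have "d / 2 / norm g * \<bar>g a\<bar> \<le> 2 * real k"
      using d by (simp add: h_def abs_mult blinfun.scaleR_left)
    with d False show ?thesis by (simp add: field_simps)
  qed simp
  moreover have "4 * real k / d \<ge> 0" using d by simp
  ultimately show ?thesis by blast
qed

lemma weakly_null_uniformly_bounded:
  fixes y :: "nat \<Rightarrow> 'a::real_normed_vector"
  assumes "weakly_null y"
  shows "\<exists>M\<ge>0. \<forall>n. \<forall>g::('a \<Rightarrow>\<^sub>L real). \<bar>blinfun_apply g (y n)\<bar> \<le> M * norm g"
proof -
  have "\<exists>B. \<forall>a\<in>range y. \<bar>g a\<bar> \<le> B" for g :: "'a \<Rightarrow>\<^sub>L real"
  proof -
    have "convergent (\<lambda>n. g (y n))"
      using assms unfolding weakly_null_def convergent_def by blast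
    then have "Bseq (\<lambda>n. g (y n))" by (rule convergent_imp_Bseq)
    then show ?thesis unfolding Bseq_def by force
  qed
  then show ?thesis using uniformly_bounded_if_weakly_bounded[of "range y"] by blast
qed

lemma weakly_precompact_uniformly_bounded:
  fixes Y :: "'a::real_normed_vector set"
  assumes "weakly_precompact Y"
  shows "\<exists>M\<ge>0. \<forall>a\<in>Y. \<forall>g::('a \<Rightarrow>\<^sub>L real). \<bar>blinfun_apply g a\<bar> \<le> M * norm g"
proof (rule uniformly_bounded_if_weakly_bounded)
  fix g :: "'a \<Rightarrow>\<^sub>L real"
  show "\<exists>B. \<forall>a\<in>Y. \<bar>g a\<bar> \<le> B"
  proof (rule ccontr)
    assume "\<not> ?thesis"
    then have "\<forall>n::nat. \<exists>a\<in>Y. real n < \<bar>g a\<bar>" by (auto simp: not_le)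
    then obtain x where x: "\<And>n. x n \<in> Y" "\<And>n. real n < \<bar>g (x n)\<bar>" by metis
    then obtain r where "strict_mono r" "weakly_cauchy (x \<circ> r)"
      using assms unfolding weakly_precompact_def by blast
    then have "Bseq (\<lambda>n. g (x (r n)))"
      unfolding weakly_cauchy_def by (simp add: Cauchy_Bseq)
    then obtain B where "\<And>n. \<bar>g (x (r n))\<bar> \<le> B" by (auto simp: Bseq_def)
    moreover obtain n where "B < real n" using reals_Archimedean2 by blast
    moreover have "real n \<le> real (r n)" using \<open>strict_mono r\<close> by (simp add: seq_suble)
    ultimately show False using x(2)[of "r n"] by (meson le_less_trans less_asym)
  qed
qed

section \<open>L-sets, complete continuity and compactness\<close>

lemma norm_blinfun_le_ball:
  fixes \<phi> :: "'a::real_normed_vector \<Rightarrow>\<^sub>L real"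
  assumes e: "e \<ge> 0" and bound: "\<And>a. a \<in> ball 0 1 \<Longrightarrow> \<bar>\<phi> a\<bar> \<le> e"
  shows "norm \<phi> \<le> e"
proof (rule norm_blinfun_bound[OF e])
  fix z
  show "norm (\<phi> z) \<le> e * norm z"
  proof (rule field_le_epsilon)
    fix \<eta> :: real assume \<eta>: "\<eta> > 0"
    define c where "c = norm z + \<eta> / (e + 1)"
    have c: "c > 0" "c > norm z" using \<eta> e by (auto simp: c_def add_nonneg_pos)
    then have "(1/c) *\<^sub>R z \<in> ball 0 1" by (simp add: field_simps)
    then have "\<bar>\<phi> ((1/c) *\<^sub>R z)\<bar> \<le> e" by (rule bound)
    then have "\<bar>\<phi> z\<bar> / c \<le> e" using c by (simp add: blinfun.scaleR_right abs_mult)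
    then have "\<bar>\<phi> z\<bar> \<le> e * norm z + e * (\<eta> / (e + 1))"
      using c by (simp add: field_simps c_def)
    also have "e * (\<eta> / (e + 1)) \<le> \<eta>" using e \<eta> by (simp add: field_simps)
    finally show "norm (\<phi> z) \<le> e * norm z + \<eta>" by simp
  qed
qed

lemma L_set_compact:
  fixes K :: "('a::real_normed_vector \<Rightarrow>\<^sub>L real) set"
  assumes "compact K"
  shows "L_set K"
  unfolding L_set_def
proof (intro allI impI)
  fix y :: "nat \<Rightarrow> 'a" and e :: real
  assume y: "weakly_null y" and e: "e > 0"
  obtain M where M: "M \<ge> 0" "\<And>n g. \<bar>blinfun_apply g (y n)\<bar> \<le> M * norm g"
    using weakly_null_uniformly_bounded[OF y] by blast
  define \<delta> where "\<delta> = e / (2 * (M + 1))"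
  have \<delta>: "\<delta> > 0" "M * \<delta> \<le> e/2"
    using e M by (auto simp: \<delta>_def field_simps)
  obtain k where k: "finite k" "K \<subseteq> (\<Union>h\<in>k. ball h \<delta>)"
    using assms \<delta>(1) unfolding compact_eq_totally_bounded by metis
  have "\<forall>\<^sub>F n in sequentially. \<bar>h (y n)\<bar> \<le> e/2" for h :: "'a \<Rightarrow>\<^sub>L real"
  proof -
    have "(\<lambda>n. h (y n)) \<longlonglongrightarrow> 0" using y unfolding weakly_null_def by blast
    then have "\<forall>\<^sub>F n in sequentially. dist (h (y n)) 0 < e/2" using e by (intro tendstoD) auto
    then show ?thesis by (rule eventually_mono) simp
  qed
  then have "\<forall>\<^sub>F n in sequentially. \<forall>h\<in>k. \<bar>h (y n)\<bar> \<le> e/2"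
    using k(1) by (simp add: eventually_ball_finite)
  then show "\<forall>\<^sub>F n in sequentially. \<forall>g\<in>K. \<bar>g (y n)\<bar> \<le> e"
  proof (rule eventually_mono)
    fix n assume small: "\<forall>h\<in>k. \<bar>h (y n)\<bar> \<le> e/2"
    show "\<forall>g\<in>K. \<bar>g (y n)\<bar> \<le> e"
    proof
      fix g assume "g \<in> K"
      then obtain h where h: "h \<in> k" "norm (g - h) < \<delta>"
        using k(2) by (auto simp: dist_norm norm_minus_commute)
      have "\<bar>(g - h) (y n)\<bar> \<le> M * \<delta>"
        using M h(2) by (meson less_imp_le mult_left_mono order_trans)
      moreover have "g (y n) = (g - h) (y n) + h (y n)"
        by (simp add: blinfun.diff_left)
      ultimately show "\<bar>g (y n)\<bar> \<le> e" using small h(1) \<delta>(2) by fastforce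
    qed
  qed
qed

lemma L_set_if_compact_closure:
  fixes E :: "('a::real_normed_vector \<Rightarrow>\<^sub>L real) set"
  assumes "compact (closure E)"
  shows "L_set E"
  unfolding L_set_def
proof (intro allI impI)
  fix x :: "nat \<Rightarrow> 'a" and e :: real assume "weakly_null x" "e > 0"
  then have "\<forall>\<^sub>F n in sequentially. \<forall>g\<in>closure E. \<bar>g (x n)\<bar> \<le> e"
    using L_set_compact[OF assms] unfolding L_set_def by blast
  then show "\<forall>\<^sub>F n in sequentially. \<forall>g\<in>E. \<bar>g (x n)\<bar> \<le> e"
    by (rule eventually_mono) (use closure_subset in blast)
qed

lemma completely_continuous_if_L_set_transpose:
  fixes P :: "'a::real_normed_vector \<Rightarrow> ('b::real_normed_vector \<Rightarrow>\<^sub>L real)"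
    and Q :: "'b \<Rightarrow> ('a \<Rightarrow>\<^sub>L real)"
  assumes transpose: "\<And>a y. blinfun_apply (P a) y = blinfun_apply (Q y) a"
    and L: "L_set (P ` ball 0 1)"
  shows "completely_continuous Q"
  unfolding completely_continuous_def
proof (intro allI impI)
  fix y :: "nat \<Rightarrow> 'b" assume "weakly_null y"
  show "(\<lambda>n. Q (y n)) \<longlonglongrightarrow> 0"
  proof (rule tendstoI)
    fix e :: real assume "e > 0"
    then have "e/2 > 0" by simp
    then have "\<forall>\<^sub>F n in sequentially. \<forall>g\<in>P ` ball 0 1. \<bar>g (y n)\<bar> \<le> e/2"
      using L \<open>weakly_null y\<close> unfolding L_set_def by blast
    then show "\<forall>\<^sub>F n in sequentially. dist (Q (y n)) 0 < e"
    proof (rule eventually_mono)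
      fix n assume "\<forall>g\<in>P ` ball 0 1. \<bar>g (y n)\<bar> \<le> e/2"
      then have "norm (Q (y n)) \<le> e/2"
        using \<open>e > 0\<close> by (intro norm_blinfun_le_ball) (auto simp: transpose)
      with \<open>e > 0\<close> show "dist (Q (y n)) 0 < e" by simp
    qed
  qed
qed

lemma L_set_transpose_image:
  fixes P :: "'a::real_normed_vector \<Rightarrow> ('b::real_normed_vector \<Rightarrow>\<^sub>L real)"
    and Q :: "'b \<Rightarrow> ('a \<Rightarrow>\<^sub>L real)"
  assumes transpose: "\<And>a y. blinfun_apply (P a) y = blinfun_apply (Q y) a"
    and "completely_continuous Q"
    and M: "M \<ge> 0" "\<forall>a\<in>Y. \<forall>g::('a \<Rightarrow>\<^sub>L real). \<bar>blinfun_apply g a\<bar> \<le> M * norm g"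
  shows "L_set (P ` Y)"
  unfolding L_set_def
proof (intro allI impI)
  fix y :: "nat \<Rightarrow> 'b" and e :: real
  assume "weakly_null y" and "e > 0"
  then have "(\<lambda>n. Q (y n)) \<longlonglongrightarrow> 0"
    using \<open>completely_continuous Q\<close> unfolding completely_continuous_def by blast
  moreover have "e / (M + 1) > 0" using \<open>e > 0\<close> M(1) by simp
  ultimately have "\<forall>\<^sub>F n in sequentially. norm (Q (y n)) < e / (M + 1)"
    by (auto dest: order_tendstoD(2)[OF tendsto_norm_zero])
  then show "\<forall>\<^sub>F n in sequentially. \<forall>g\<in>P ` Y. \<bar>g (y n)\<bar> \<le> e"
  proof (rule eventually_mono)
    fix n assume small: "norm (Q (y n)) < e / (M + 1)"
    have "\<bar>P a (y n)\<bar> \<le> e" if "a \<in> Y" for a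
    proof -
      have "\<bar>P a (y n)\<bar> \<le> M * norm (Q (y n))" using M that by (simp add: transpose)
      also have "\<dots> \<le> M * (e / (M + 1))" using small M(1) by (intro mult_left_mono) auto
      also have "\<dots> \<le> e" using M(1) \<open>e > 0\<close> by (simp add: field_simps)
      finally show ?thesis .
    qed
    then show "\<forall>g\<in>P ` Y. \<bar>g (y n)\<bar> \<le> e" by blast
  qed
qed

lemma Cauchy_if_completely_continuous:
  fixes T :: "'a::real_normed_vector \<Rightarrow> 'b::real_normed_vector"
  assumes diff: "\<And>a b. T (a - b) = T a - T b"
    and cc: "completely_continuous T" and "weakly_cauchy x"
  shows "Cauchy (T \<circ> x)"
proof (rule ccontr)
  assume "\<not> Cauchy (T \<circ> x)"
  then obtain e where e: "e > 0" "\<forall>N. \<exists>m\<ge>N. \<exists>n\<ge>N. \<not> dist (T (x m)) (T (x n)) < e"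
    unfolding Cauchy_def by auto
  then obtain p q where pq: "\<And>N. N \<le> p N" "\<And>N. N \<le> q N"
    "\<And>N. e \<le> dist (T (x (p N))) (T (x (q N)))"
    by (metis not_less)
  have "weakly_null (\<lambda>N. x (p N) - x (q N))"
    unfolding weakly_null_def
  proof (intro allI LIMSEQ_I)
    fix g :: "'a \<Rightarrow>\<^sub>L real" and r :: real assume "r > 0"
    then obtain M where M: "\<forall>m\<ge>M. \<forall>n\<ge>M. dist (g (x m)) (g (x n)) < r"
      using \<open>weakly_cauchy x\<close> unfolding weakly_cauchy_def Cauchy_def by blast
    show "\<exists>M. \<forall>N\<ge>M. norm (g (x (p N) - x (q N)) - 0) < r"
    proof (intro exI allI impI)
      fix N assume "M \<le> N"
      then have "M \<le> p N" "M \<le> q N" using pq(1,2) le_trans by blast+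
      with M show "norm (g (x (p N) - x (q N)) - 0) < r"
        by (simp add: blinfun.diff_right dist_real_def)
    qed
  qed
  then have "(\<lambda>N. T (x (p N) - x (q N))) \<longlonglongrightarrow> 0"
    using cc unfolding completely_continuous_def by blast
  then have "\<exists>N0. \<forall>N\<ge>N0. norm (T (x (p N) - x (q N)) - 0) < e"
    using e(1) by (rule LIMSEQ_D)
  then obtain N where "norm (T (x (p N)) - T (x (q N))) < e"
    by (auto simp: diff)
  then show False using pq(3)[of N] by (simp add: dist_norm)
qed

lemma compact_closure_if_Cauchy_subseq:
  fixes S :: "'a::complete_space set"
  assumes "\<And>\<sigma> :: nat \<Rightarrow> 'a. range \<sigma> \<subseteq> S \<Longrightarrow> \<exists>r. strict_mono r \<and> Cauchy (\<sigma> \<circ> r)"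
  shows "compact (closure S)"
proof -
  have "Met_TC.mtotally_bounded S"
    using assms by (auto simp: Met_TC.mtotally_bounded_sequentially)
  then show ?thesis
    using Met_TC.mtotally_bounded_eq_compact_closure_of[of S] complete_UNIV by simp
qed

lemma compact_if_completely_continuous:
  fixes T :: "'a::real_normed_vector \<Rightarrow> 'b::banach"
  assumes diff: "\<And>a b. T (a - b) = T a - T b"
    and cc: "completely_continuous T" and wp: "weakly_precompact (ball (0::'a) 1)"
  shows "compact (closure (T ` ball 0 1))"
proof (rule compact_closure_if_Cauchy_subseq)
  fix \<sigma> :: "nat \<Rightarrow> 'b" assume "range \<sigma> \<subseteq> T ` ball 0 1"
  then have "\<forall>n. \<exists>a\<in>ball 0 1. \<sigma> n = T a" by blast
  then obtain x where x: "\<And>n. x n \<in> ball 0 1" and "\<And>n. \<sigma> n = T (x n)" by metis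
  then have \<sigma>: "\<sigma> = T \<circ> x" by auto
  obtain r where "strict_mono r" "weakly_cauchy (x \<circ> r)"
    using wp x unfolding weakly_precompact_def by blast
  then show "\<exists>r. strict_mono r \<and> Cauchy (\<sigma> \<circ> r)"
    using Cauchy_if_completely_continuous[OF diff cc] by (auto simp: \<sigma> comp_assoc)
qed

section \<open>Rosenthal's dichotomy for sequences of pairs of sets\<close>

definition boolean_independent :: "(nat \<Rightarrow> 'w set) \<Rightarrow> (nat \<Rightarrow> 'w set) \<Rightarrow> 'w set \<Rightarrow> bool" where
  "boolean_independent A B \<Omega> \<longleftrightarrow>
     (\<forall>k (\<epsilon>::nat \<Rightarrow> bool). \<exists>w\<in>\<Omega>. \<forall>i<k. if \<epsilon> i then w \<in> B i else w \<in> A i)"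

definition converges_along :: "(nat \<Rightarrow> 'w set) \<Rightarrow> (nat \<Rightarrow> 'w set) \<Rightarrow> 'w set \<Rightarrow> nat set \<Rightarrow> bool" where
  "converges_along A B C L \<longleftrightarrow> (\<forall>w\<in>C. finite {n\<in>L. w \<in> A n} \<or> finite {n\<in>L. w \<in> B n})"

definition oscillates_along :: "(nat \<Rightarrow> 'w set) \<Rightarrow> (nat \<Rightarrow> 'w set) \<Rightarrow> 'w set \<Rightarrow> nat set \<Rightarrow> bool" where
  "oscillates_along A B C L \<longleftrightarrow> (\<forall>L'\<subseteq>L. infinite L' \<longrightarrow> \<not> converges_along A B C L')"

lemma converges_along_almost_subset:
  assumes "converges_along A B C L" and "finite (L' - L)"
  shows "converges_along A B C L'"
proof -
  have cover: "{n\<in>L'. P n} \<subseteq> {n\<in>L. P n} \<union> (L' - L)" for P by blast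
  show ?thesis
    unfolding converges_along_def
  proof
    fix w assume "w \<in> C"
    then have "finite {n\<in>L. w \<in> A n} \<or> finite {n\<in>L. w \<in> B n}"
      using assms(1) unfolding converges_along_def by blast
    moreover have lift: "finite {n\<in>L'. P n}" if "finite {n\<in>L. P n}" for P
      using finite_subset[OF cover[of P]] that assms(2) by simp
    ultimately show "finite {n\<in>L'. w \<in> A n} \<or> finite {n\<in>L'. w \<in> B n}"
      using lift[of "\<lambda>n. w \<in> A n"] lift[of "\<lambda>n. w \<in> B n"] by blast
  qed
qed

lemma oscillates_along_nonempty:
  assumes "oscillates_along A B C L" and "infinite L"
  shows "C \<noteq> {}"
proof
  assume "C = {}"
  then have "converges_along A B C L" by (simp add: converges_along_def)
  with assms show False unfolding oscillates_along_def by blast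
qed

lemma nested_infinite_sets:
  fixes L :: "nat set" and Q :: "nat \<Rightarrow> nat set \<Rightarrow> nat set \<Rightarrow> bool"
  assumes "infinite L"
    and step: "\<And>i S. infinite S \<Longrightarrow> S \<subseteq> L \<Longrightarrow> \<exists>S'. infinite S' \<and> S' \<subseteq> S - {Inf S} \<and> Q i S S'"
  shows "\<exists>S. S 0 = L \<and> (\<forall>i. infinite (S i) \<and> S (Suc i) \<subseteq> S i - {Inf (S i)} \<and> Q i (S i) (S (Suc i)))"
proof -
  have "\<exists>S. \<forall>i. (infinite (S i) \<and> S i \<subseteq> L \<and> (i = 0 \<longrightarrow> S i = L)) \<and>
      (S (Suc i) \<subseteq> S i - {Inf (S i)} \<and> Q i (S i) (S (Suc i)))"
  proof (rule dependent_nat_choice)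
    show "\<exists>S. infinite S \<and> S \<subseteq> L \<and> (0 = 0 \<longrightarrow> S = L)" using assms(1) by blast
  next
    fix S :: "nat set" and i :: nat assume "infinite S \<and> S \<subseteq> L \<and> (i = 0 \<longrightarrow> S = L)"
    then obtain S' where "infinite S'" "S' \<subseteq> S - {Inf S}" "Q i S S'" "S \<subseteq> L"
      using step[of S i] by auto
    then show "\<exists>S'. (infinite S' \<and> S' \<subseteq> L \<and> (Suc i = 0 \<longrightarrow> S' = L)) \<and>
        (S' \<subseteq> S - {Inf S} \<and> Q i S S')" by auto
  qed
  then show ?thesis by blast
qed

lemma Inf_nested_sets:
  fixes S :: "nat \<Rightarrow> nat set"
  assumes infinite: "\<And>i. infinite (S i)" and nested: "\<And>i. S (Suc i) \<subseteq> S i - {Inf (S i)}"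
  shows "strict_mono (\<lambda>i. Inf (S i))" and "i \<le> j \<Longrightarrow> Inf (S j) \<in> S i"
    and "range (\<lambda>i. Inf (S i)) - S (Suc i) \<subseteq> (\<lambda>i. Inf (S i)) ` {..i}"
proof -
  have Inf_mem: "Inf (S i) \<in> S i" for i
    using infinite[of i] by (intro Inf_nat_def1) auto
  have antimono: "S j \<subseteq> S i" if "i \<le> j" for i j
    using lift_Suc_antimono_le[of S] nested that by blast
  show "strict_mono (\<lambda>i. Inf (S i))"
  proof (rule strict_monoI_Suc)
    fix i
    have "Inf (S (Suc i)) \<in> S i - {Inf (S i)}" using Inf_mem nested by blast
    then show "Inf (S i) < Inf (S (Suc i))"
      using cInf_lower[of _ "S i"] by (auto simp: order.strict_iff_order)
  qed
  show "i \<le> j \<Longrightarrow> Inf (S j) \<in> S i" using Inf_mem antimono by blast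
  show "range (\<lambda>i. Inf (S i)) - S (Suc i) \<subseteq> (\<lambda>i. Inf (S i)) ` {..i}"
  proof
    fix n assume "n \<in> range (\<lambda>i. Inf (S i)) - S (Suc i)"
    then obtain j where "n = Inf (S j)" "Inf (S j) \<notin> S (Suc i)" by blast
    then have "j \<le> i" using Inf_mem antimono[of "Suc i" j] by (cases "j \<le> i") auto
    then show "n \<in> (\<lambda>i. Inf (S i)) ` {..i}" using \<open>n = Inf (S j)\<close> by simp
  qed
qed

lemma converges_along_Inf_image:
  fixes S :: "nat \<Rightarrow> nat set"
  assumes "\<And>i. infinite (S i)" and "\<And>i. S (Suc i) \<subseteq> S i - {Inf (S i)}"
    and side: "X \<in> {A, B}"
    and converges: "\<And>i. i \<in> I \<Longrightarrow> converges_along A B (C \<inter> X (Inf (S i))) (S (Suc i))"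
  shows "converges_along A B C ((\<lambda>i. Inf (S i)) ` I)"
  unfolding converges_along_def
proof
  fix w assume "w \<in> C"
  let ?L = "(\<lambda>i. Inf (S i)) ` I"
  show "finite {n\<in>?L. w \<in> A n} \<or> finite {n\<in>?L. w \<in> B n}"
  proof (cases "finite {n\<in>?L. w \<in> X n}")
    case True
    with side show ?thesis by blast
  next
    case False
    then obtain i where "i \<in> I" "w \<in> X (Inf (S i))" using not_finite_existsD by blast
    have "?L - S (Suc i) \<subseteq> (\<lambda>i. Inf (S i)) ` {..i}"
      using Inf_nested_sets(3)[of S, OF assms(1,2), of i] by blast
    then have "finite (?L - S (Suc i))" by (rule finite_subset) simp
    with converges[OF \<open>i \<in> I\<close>] have "converges_along A B (C \<inter> X (Inf (S i))) ?L"
      by (rule converges_along_almost_subset)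
    with \<open>w \<in> C\<close> \<open>w \<in> X (Inf (S i))\<close> show ?thesis unfolding converges_along_def by blast
  qed
qed

lemma converges_along_if_nested_witnesses:
  fixes S :: "nat \<Rightarrow> nat set"
  assumes "finite \<C>" and infinite: "\<And>i. infinite (S i)"
    and nested: "\<And>i. S (Suc i) \<subseteq> S i - {Inf (S i)}"
    and witness: "\<And>i. \<exists>C\<in>\<C>. \<exists>X\<in>{A, B}. converges_along A B (C \<inter> X (Inf (S i))) (S (Suc i))"
  shows "\<exists>C\<in>\<C>. \<exists>L'\<subseteq>S 0. infinite L' \<and> converges_along A B C L'"
proof -
  have "\<forall>i. \<exists>t \<in> \<C> \<times> {A, B}. converges_along A B (fst t \<inter> snd t (Inf (S i))) (S (Suc i))"
    using witness by fastforce
  from this[unfolded Bex_def, THEN choice] obtain tag where tag: "\<And>i. tag i \<in> \<C> \<times> {A, B}"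
    "\<And>i. converges_along A B (fst (tag i) \<inter> snd (tag i) (Inf (S i))) (S (Suc i))"
    by blast
  have "finite (range tag)"
    by (rule finite_subset[of _ "\<C> \<times> {A, B}"]) (use tag(1) \<open>finite \<C>\<close> in blast, simp add: \<open>finite \<C>\<close>)
  then obtain i0 where "infinite {i. tag i = tag i0}"
    using pigeonhole_infinite[of UNIV tag] by auto
  moreover obtain C X where CX: "tag i0 = (C, X)" by (metis surj_pair)
  ultimately have I: "infinite {i. tag i = (C, X)}" by simp
  have "C \<in> \<C>" "X \<in> {A, B}" using tag(1)[of i0] CX by auto
  let ?L = "(\<lambda>i. Inf (S i)) ` {i. tag i = (C, X)}"
  have "converges_along A B (C \<inter> X (Inf (S i))) (S (Suc i))" if "tag i = (C, X)" for i
    using tag(2)[of i] that by simp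
  then have "converges_along A B C ?L"
    by (intro converges_along_Inf_image[of S, OF infinite nested \<open>X \<in> {A, B}\<close>]) simp
  moreover have "infinite ?L"
    using I Inf_nested_sets(1)[of S, OF infinite nested]
    by (simp add: finite_image_iff inj_on_subset strict_mono_imp_inj_on)
  moreover have "?L \<subseteq> S 0" using Inf_nested_sets(2)[of S, OF infinite nested, of 0] by auto
  ultimately show ?thesis using \<open>C \<in> \<C>\<close> by blast
qed

lemma oscillates_along_split:
  fixes \<C> :: "'w set set"
  assumes "finite \<C>" and "infinite L" and oscillates: "\<forall>C\<in>\<C>. oscillates_along A B C L"
  shows "\<exists>n\<in>L. \<exists>L'\<subseteq>L. infinite L' \<and> (\<forall>m\<in>L'. n < m) \<and>
           (\<forall>C\<in>\<C>. oscillates_along A B (C \<inter> A n) L' \<and> oscillates_along A B (C \<inter> B n) L')"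
proof (rule ccontr)
  assume fails: "\<not> ?thesis"
  define Q where "Q i S S' \<longleftrightarrow> (\<exists>C\<in>\<C>. \<exists>X\<in>{A, B}. converges_along A B (C \<inter> X (Inf S)) S')"
    for i :: nat and S S' :: "nat set"
  have step: "\<exists>S'. infinite S' \<and> S' \<subseteq> S - {Inf S} \<and> Q i S S'" if S: "infinite S" "S \<subseteq> L" for i S
  proof -
    have "Inf S \<in> L" using S Inf_nat_def1[of S] by auto
    moreover have "\<forall>m\<in>S - {Inf S}. Inf S < m"
      using cInf_lower[of _ S] by (auto simp: order.strict_iff_order)
    moreover have "infinite (S - {Inf S})" "S - {Inf S} \<subseteq> L" using S by auto
    ultimately obtain C where "C \<in> \<C>" "\<not> oscillates_along A B (C \<inter> A (Inf S)) (S - {Inf S}) \<or>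
        \<not> oscillates_along A B (C \<inter> B (Inf S)) (S - {Inf S})"
      using fails by blast
    then show ?thesis unfolding oscillates_along_def Q_def by blast
  qed
  have "\<exists>S. S 0 = L \<and> (\<forall>i. infinite (S i) \<and> S (Suc i) \<subseteq> S i - {Inf (S i)} \<and> Q i (S i) (S (Suc i)))"
  proof (rule nested_infinite_sets)
    fix i S assume "infinite S" "S \<subseteq> L"
    then show "\<exists>S'. infinite S' \<and> S' \<subseteq> S - {Inf S} \<and> Q i S S'" by (rule step)
  qed fact
  then obtain S where "S 0 = L"
    and S: "\<forall>i. infinite (S i) \<and> S (Suc i) \<subseteq> S i - {Inf (S i)} \<and> Q i (S i) (S (Suc i))"
    by blast
  have "\<exists>C\<in>\<C>. \<exists>L'\<subseteq>S 0. infinite L' \<and> converges_along A B C L'"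
    using \<open>finite \<C>\<close> by (rule converges_along_if_nested_witnesses) (use S in \<open>auto simp: Q_def\<close>)
  with \<open>S 0 = L\<close> oscillates show False unfolding oscillates_along_def by blast
qed

lemma oscillating_refinements:
  fixes \<Omega> :: "'a set"
  assumes "oscillates_along A B \<Omega> L" and "infinite L"
  obtains \<nu> :: "nat \<Rightarrow> nat" and \<C> :: "nat \<Rightarrow> 'a set set" and M :: "nat \<Rightarrow> nat set"
  where "strict_mono \<nu>" "\<C> 0 = {\<Omega>}"
    "\<And>k. \<C> (Suc k) = (\<lambda>C. C \<inter> A (\<nu> k)) ` \<C> k \<union> (\<lambda>C. C \<inter> B (\<nu> k)) ` \<C> k"
    "\<And>k. infinite (M k)" "\<And>k C. C \<in> \<C> k \<Longrightarrow> oscillates_along A B C (M k)"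
proof -
  define refine where "refine n \<C> = (\<lambda>C. C \<inter> A n) ` \<C> \<union> (\<lambda>C. C \<inter> B n) ` \<C>"
    for n and \<C> :: "'a set set"
  define P where "P k s \<longleftrightarrow> infinite (fst s) \<and> finite (snd s) \<and>
      (\<forall>C\<in>snd s. oscillates_along A B C (fst s)) \<and> (k = 0 \<longrightarrow> s = (L, {\<Omega>}))" for k :: nat and s
  define R where "R s s' \<longleftrightarrow> (\<exists>n\<in>fst s. (\<forall>m\<in>fst s'. n < m) \<and> snd s' = refine n (snd s))"
    for s s'
  have "\<exists>st. \<forall>k. P k (st k) \<and> R (st k) (st (Suc k))"
  proof (rule dependent_nat_choice)
    show "\<exists>s. P 0 s" using assms by (auto simp: P_def)
  next
    fix s and k :: nat assume "P k s"
    then obtain n M' where "n \<in> fst s" "infinite M'" "\<forall>m\<in>M'. n < m"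
      "\<forall>C\<in>snd s. oscillates_along A B (C \<inter> A n) M' \<and> oscillates_along A B (C \<inter> B n) M'"
      using oscillates_along_split[of "snd s" "fst s" A B] unfolding P_def by blast
    then show "\<exists>s'. P (Suc k) s' \<and> R s s'"
      using \<open>P k s\<close> by (intro exI[of _ "(M', refine n (snd s))"]) (auto simp: P_def R_def refine_def)
  qed
  then obtain st where st: "\<And>k. P k (st k)" "\<And>k. R (st k) (st (Suc k))" by blast
  then have "\<forall>k. \<exists>n. n \<in> fst (st k) \<and> (\<forall>m\<in>fst (st (Suc k)). n < m) \<and>
      snd (st (Suc k)) = refine n (snd (st k))"
    unfolding R_def by blast
  from choice[OF this] obtain \<nu> where \<nu>: "\<And>k. \<nu> k \<in> fst (st k)"
    "\<And>k. \<forall>m\<in>fst (st (Suc k)). \<nu> k < m" "\<And>k. snd (st (Suc k)) = refine (\<nu> k) (snd (st k))"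
    by blast
  have "strict_mono \<nu>" using \<nu>(1,2) by (intro strict_monoI_Suc) blast
  then show thesis
    by (rule that[of \<nu> "\<lambda>k. snd (st k)" "\<lambda>k. fst (st k)"])
      (use st(1) \<nu>(3) in \<open>auto simp: P_def refine_def\<close>)
qed

lemma oscillates_along_imp_independent:
  fixes \<Omega> :: "'a set"
  assumes "oscillates_along A B \<Omega> L" and "infinite L"
  shows "\<exists>\<nu>. strict_mono \<nu> \<and> boolean_independent (A \<circ> \<nu>) (B \<circ> \<nu>) \<Omega>"
proof -
  obtain \<nu> :: "nat \<Rightarrow> nat" and \<C> :: "nat \<Rightarrow> 'a set set" and M :: "nat \<Rightarrow> nat set"
    where \<nu>: "strict_mono \<nu>" and \<C>: "\<C> 0 = {\<Omega>}"
      "\<And>k. \<C> (Suc k) = (\<lambda>C. C \<inter> A (\<nu> k)) ` \<C> k \<union> (\<lambda>C. C \<inter> B (\<nu> k)) ` \<C> k"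
    and M: "\<And>k. infinite (M k)" "\<And>k C. C \<in> \<C> k \<Longrightarrow> oscillates_along A B C (M k)"
    by (rule oscillating_refinements[OF assms]) (rule that, assumption+)
  \<comment> \<open>the k-th family consists of the 2^k atoms cut out of \<Omega> by the first k pairs\<close>
  define atom where "atom k \<epsilon> = {w\<in>\<Omega>. \<forall>i<k. if \<epsilon> i then w \<in> B (\<nu> i) else w \<in> A (\<nu> i)}"
    for k and \<epsilon> :: "nat \<Rightarrow> bool"
  have "atom k \<epsilon> \<in> \<C> k" for k \<epsilon>
  proof (induction k)
    case 0
    then show ?case by (simp add: \<C>(1) atom_def)
  next
    case (Suc k)
    have "atom (Suc k) \<epsilon> = atom k \<epsilon> \<inter> (if \<epsilon> k then B (\<nu> k) else A (\<nu> k))"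
      by (auto simp: atom_def less_Suc_eq)
    then show ?case using Suc \<C>(2)[of k] by simp
  qed
  then have "atom k \<epsilon> \<noteq> {}" for k \<epsilon>
    using M oscillates_along_nonempty by blast
  then have "boolean_independent (A \<circ> \<nu>) (B \<circ> \<nu>) \<Omega>"
    unfolding boolean_independent_def atom_def comp_def by blast
  with \<nu> show ?thesis by blast
qed

lemma converges_along_subset_or_independent:
  assumes "infinite L"
  obtains L' where "L' \<subseteq> L" "infinite L'" "converges_along A B \<Omega> L'"
  | \<nu> where "strict_mono \<nu>" "boolean_independent (A \<circ> \<nu>) (B \<circ> \<nu>) \<Omega>"
  using oscillates_along_imp_independent[OF _ assms] unfolding oscillates_along_def by blast

lemma diagonal_infinite_set:
  fixes P :: "'i::countable \<Rightarrow> nat set \<Rightarrow> bool"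
  assumes refine: "\<And>j L. infinite L \<Longrightarrow> \<exists>L'\<subseteq>L. infinite L' \<and> P j L'"
  obtains d :: "nat \<Rightarrow> nat" where "strict_mono d" and "\<And>j. \<exists>L. P j L \<and> finite (range d - L)"
proof -
  have "\<exists>S. S 0 = UNIV \<and>
      (\<forall>i. infinite (S i) \<and> S (Suc i) \<subseteq> S i - {Inf (S i)} \<and> P (from_nat i) (S (Suc i)))"
  proof (rule nested_infinite_sets)
    fix i and S :: "nat set" assume "infinite S"
    then show "\<exists>S'. infinite S' \<and> S' \<subseteq> S - {Inf S} \<and> P (from_nat i) S'"
      using refine[of "S - {Inf S}" "from_nat i"] by auto
  qed simp
  then obtain S where S: "\<forall>i. infinite (S i) \<and> S (Suc i) \<subseteq> S i - {Inf (S i)} \<and> P (from_nat i) (S (Suc i))"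
    by blast
  define d where "d = (\<lambda>i. Inf (S i))"
  have "\<And>i. infinite (S i)" "\<And>i. S (Suc i) \<subseteq> S i - {Inf (S i)}" using S by blast+
  note d = Inf_nested_sets[of S, OF this, folded d_def]
  have "\<exists>L. P j L \<and> finite (range d - L)" for j
  proof -
    have "P j (S (Suc (to_nat j)))" using S by (metis from_nat_to_nat)
    moreover have "finite (range d - S (Suc (to_nat j)))"
      using d(3)[of "to_nat j"] by (rule finite_subset) simp
    ultimately show ?thesis by blast
  qed
  with d(1) show thesis using that by blast
qed

section \<open>Rosenthal's l1 theorem\<close>

definition functionals_le :: "(nat \<Rightarrow> 'a::real_normed_vector) \<Rightarrow> real \<Rightarrow> nat \<Rightarrow> ('a \<Rightarrow>\<^sub>L real) set" where
  "functionals_le x r n = {g::'a \<Rightarrow>\<^sub>L real. g (x n) \<le> r}"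

definition functionals_ge :: "(nat \<Rightarrow> 'a::real_normed_vector) \<Rightarrow> real \<Rightarrow> nat \<Rightarrow> ('a \<Rightarrow>\<^sub>L real) set" where
  "functionals_ge x s n = {g::'a \<Rightarrow>\<^sub>L real. s \<le> g (x n)}"

lemma functionals_le_comp: "functionals_le x r \<circ> \<nu> = functionals_le (x \<circ> \<nu>) r"
  and functionals_ge_comp: "functionals_ge x s \<circ> \<nu> = functionals_ge (x \<circ> \<nu>) s"
  by (auto simp: functionals_le_def functionals_ge_def)

lemma boolean_independent_lower_estimate:
  fixes y :: "nat \<Rightarrow> 'a::real_normed_vector"
  assumes independent: "boolean_independent (functionals_le y r) (functionals_ge y s) (cball 0 1)"
  shows "(s - r) / 2 * (\<Sum>i<k. \<bar>a i\<bar>) \<le> norm (\<Sum>i<k. a i *\<^sub>R y i)"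
proof -
  \<comment> \<open>one functional separates the indices with a i \<ge> 0 from the others, a second one does the opposite\<close>
  obtain g g' :: "'a \<Rightarrow>\<^sub>L real" where "norm g \<le> 1" "norm g' \<le> 1"
    and g: "\<forall>i<k. if a i \<ge> 0 then s \<le> g (y i) else g (y i) \<le> r"
    and g': "\<forall>i<k. if a i \<ge> 0 then g' (y i) \<le> r else s \<le> g' (y i)"
    using independent[unfolded boolean_independent_def, rule_format, of k "\<lambda>i. a i \<ge> 0"]
      independent[unfolded boolean_independent_def, rule_format, of k "\<lambda>i. \<not> a i \<ge> 0"]
    by (auto simp: functionals_le_def functionals_ge_def if_distrib cong: if_cong)
  then have "norm (g - g') \<le> 2"
    using norm_triangle_ineq4[of g g'] by linarith
  have "(s - r) * \<bar>a i\<bar> \<le> a i * ((g - g') (y i))" if "i < k" for i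
  proof (cases "a i \<ge> 0")
    case True
    with g[rule_format, OF that] g'[rule_format, OF that]
    have "s - r \<le> (g - g') (y i)" by (simp add: blinfun.diff_left)
    with True show ?thesis by (simp add: mult.commute mult_left_mono)
  next
    case False
    with g[rule_format, OF that] g'[rule_format, OF that]
    have "(g - g') (y i) \<le> r - s" by (simp add: blinfun.diff_left)
    with False show ?thesis
      using mult_left_mono_neg[of "(g - g') (y i)" "r - s" "a i"] by (simp add: algebra_simps)
  qed
  then have "(s - r) * (\<Sum>i<k. \<bar>a i\<bar>) \<le> (\<Sum>i<k. a i * (g - g') (y i))"
    unfolding sum_distrib_left by (intro sum_mono) (simp del: blinfun.diff_left)
  also have "\<dots> = (g - g') (\<Sum>i<k. a i *\<^sub>R y i)"
    by (simp add: blinfun.sum_right blinfun.scaleR_right del: blinfun.diff_left)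
  also have "\<dots> \<le> norm (g - g') * norm (\<Sum>i<k. a i *\<^sub>R y i)"
    by (metis abs_le_D1 norm_blinfun real_norm_def)
  also have "\<dots> \<le> 2 * norm (\<Sum>i<k. a i *\<^sub>R y i)"
    using \<open>norm (g - g') \<le> 2\<close> by (simp add: mult_right_mono)
  finally show ?thesis by simp
qed

lemma contains_l1_if_lower_estimate:
  fixes y :: "nat \<Rightarrow> 'a::banach"
  assumes bounded: "\<And>n. norm (y n) \<le> 1" and "c > 0"
    and lower: "\<And>a k. c * (\<Sum>i<k. \<bar>a i\<bar>) \<le> norm (\<Sum>i<k. a i *\<^sub>R y i)"
  shows "contains_l1 TYPE('a)"
proof -
  define J where "J a = (\<Sum>i. a i *\<^sub>R y i)" for a :: "nat \<Rightarrow> real"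
  have norm_summable: "summable (\<lambda>i. norm (a i *\<^sub>R y i))" if "summable (\<lambda>n. \<bar>a n\<bar>)" for a
    by (rule summable_comparison_test[OF _ that])
      (use bounded in \<open>auto intro!: exI[of _ 0] mult_left_le simp: abs_mult\<close>)
  have summable: "summable (\<lambda>i. a i *\<^sub>R y i)" if "summable (\<lambda>n. \<bar>a n\<bar>)" for a
    using norm_summable[OF that] by (rule summable_norm_cancel)
  have "J (\<lambda>n. a n + b n) = J a + J b"
    if "summable (\<lambda>n. \<bar>a n\<bar>)" "summable (\<lambda>n. \<bar>b n\<bar>)" for a b
    unfolding J_def using suminf_add[OF summable[OF that(1)] summable[OF that(2)]]
    by (simp add: scaleR_add_left)
  moreover have "J (\<lambda>n. t * a n) = t *\<^sub>R J a" if "summable (\<lambda>n. \<bar>a n\<bar>)" for a t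
    unfolding J_def using suminf_scaleR_right[OF summable[OF that], of t] by simp
  moreover have "norm (J a) \<le> 1 * (\<Sum>n. \<bar>a n\<bar>)" if "summable (\<lambda>n. \<bar>a n\<bar>)" for a
  proof -
    have "norm (J a) \<le> (\<Sum>i. norm (a i *\<^sub>R y i))"
      unfolding J_def by (rule summable_norm[OF norm_summable[OF that]])
    also have "\<dots> \<le> (\<Sum>n. \<bar>a n\<bar>)"
      by (rule suminf_le[OF _ norm_summable[OF that] that])
        (use bounded in \<open>auto intro: mult_left_le\<close>)
    finally show ?thesis by simp
  qed
  moreover have "c * (\<Sum>n. \<bar>a n\<bar>) \<le> norm (J a)" if "summable (\<lambda>n. \<bar>a n\<bar>)" for a
  proof (rule LIMSEQ_le)
    show "(\<lambda>k. c * (\<Sum>i<k. \<bar>a i\<bar>)) \<longlonglongrightarrow> c * (\<Sum>n. \<bar>a n\<bar>)"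
      by (intro tendsto_mult tendsto_const summable_LIMSEQ that)
    show "(\<lambda>k. norm (\<Sum>i<k. a i *\<^sub>R y i)) \<longlonglongrightarrow> norm (J a)"
      unfolding J_def by (intro tendsto_norm summable_LIMSEQ summable that)
  qed (use lower in auto)
  ultimately show ?thesis
    unfolding contains_l1_def using \<open>c > 0\<close> by blast
qed

lemma converges_along_gap_if_not_contains_l1:
  fixes x :: "nat \<Rightarrow> 'a::banach"
  assumes no_l1: "\<not> contains_l1 TYPE('a)" and bounded: "\<And>n. norm (x n) \<le> 1"
    and "r < s" and "infinite L"
  obtains L' where "L' \<subseteq> L" "infinite L'"
    "converges_along (functionals_le x r) (functionals_ge x s) (cball 0 1) L'"
proof (rule converges_along_subset_or_independent[OF \<open>infinite L\<close>])
  fix \<nu> :: "nat \<Rightarrow> nat"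
  assume "boolean_independent (functionals_le x r \<circ> \<nu>) (functionals_ge x s \<circ> \<nu>) (cball 0 1)"
  then have "(s - r) / 2 * (\<Sum>i<k. \<bar>a i\<bar>) \<le> norm (\<Sum>i<k. a i *\<^sub>R (x \<circ> \<nu>) i)" for a k
    by (intro boolean_independent_lower_estimate[where y = "x \<circ> \<nu>"])
      (simp add: functionals_le_comp functionals_ge_comp)
  moreover have "(s - r) / 2 > 0" using \<open>r < s\<close> by simp
  moreover have "norm ((x \<circ> \<nu>) n) \<le> 1" for n using bounded by simp
  ultimately have "contains_l1 TYPE('a)"
    by (intro contains_l1_if_lower_estimate[of "x \<circ> \<nu>"])
  with no_l1 show thesis by contradiction
qed (rule that)

lemma convergent_if_no_rational_gap:
  fixes a :: "nat \<Rightarrow> real"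
  assumes bounded: "\<And>i. \<bar>a i\<bar> \<le> K"
    and no_gap: "\<And>q1 q2 :: rat. q1 < q2 \<Longrightarrow>
      finite {i. a i \<le> of_rat q1} \<or> finite {i. of_rat q2 \<le> a i}"
  shows "convergent a"
proof -
  \<comment> \<open>the limit is the largest value exceeded infinitely often\<close>
  define U where "U = {t. infinite {i. t \<le> a i}}"
  have "-K \<le> a i" for i using bounded[of i] by linarith
  then have "{i. -K \<le> a i} = UNIV" by auto
  then have "-K \<in> U" by (simp add: U_def)
  have U_le: "t \<le> K" if "t \<in> U" for t
  proof (rule ccontr)
    assume "\<not> t \<le> K"
    then have "a i < t" for i using bounded[of i] by linarith
    then have "{i. t \<le> a i} = {}" by (auto simp: not_le)
    with that show False by (simp add: U_def)
  qed
  then have "bdd_above U" by (auto simp: bdd_above_def)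
  have "a \<longlonglongrightarrow> Sup U"
  proof (rule LIMSEQ_I)
    fix e :: real assume "e > 0"
    have "Sup U + e/2 \<notin> U" using cSup_upper[OF _ \<open>bdd_above U\<close>] \<open>e > 0\<close> by force
    then have upper: "finite {i. Sup U + e/2 \<le> a i}" by (simp add: U_def)
    obtain r where r: "r \<in> \<rat>" "Sup U - e < r" "r < Sup U - e/2"
      using Rats_dense_in_real[of "Sup U - e" "Sup U - e/2"] \<open>e > 0\<close> by auto
    obtain s where s: "s \<in> \<rat>" "r < s" "s < Sup U"
      using Rats_dense_in_real[of r "Sup U"] r \<open>e > 0\<close> by auto
    obtain t where "t \<in> U" "s < t"
      using less_cSup_iff[OF _ \<open>bdd_above U\<close>] \<open>-K \<in> U\<close> s(3) by blast
    moreover have "{i. t \<le> a i} \<subseteq> {i. s \<le> a i}" using \<open>s < t\<close> by auto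
    ultimately have "infinite {i. s \<le> a i}" unfolding U_def using finite_subset by blast
    moreover obtain q1 q2 where "r = of_rat q1" "s = of_rat q2" using r(1) s(1) Rats_cases by metis
    ultimately have lower: "finite {i. a i \<le> r}" using no_gap s(2) by (metis of_rat_less)
    obtain N where N: "\<forall>i\<ge>N. i \<notin> {i. Sup U + e/2 \<le> a i} \<union> {i. a i \<le> r}"
      using finite_nat_set_iff_bounded_le[THEN iffD1, OF finite_UnI[OF upper lower]]
      by (metis not_less_eq_eq order_trans)
    show "\<exists>N. \<forall>n\<ge>N. norm (a n - Sup U) < e"
      using N r by (intro exI[of _ N]) auto
  qed
  then show ?thesis by (auto simp: convergent_def)
qed

lemma converges_along_range:
  assumes "converges_along A B C (range d)" and "inj d" and "w \<in> C"
  shows "finite {i. w \<in> A (d i)} \<or> finite {i. w \<in> B (d i)}"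
proof -
  have "finite {n\<in>range d. w \<in> A n} \<or> finite {n\<in>range d. w \<in> B n}"
    using assms(1,3) unfolding converges_along_def by blast
  moreover have "{i. w \<in> A (d i)} = d -` {n\<in>range d. w \<in> A n}"
    and "{i. w \<in> B (d i)} = d -` {n\<in>range d. w \<in> B n}" by auto
  ultimately show ?thesis using finite_vimageI[OF _ \<open>inj d\<close>] by (simp only:) blast
qed

lemma weakly_cauchy_if_convergent_on_unit_ball:
  fixes x :: "nat \<Rightarrow> 'a::real_normed_vector"
  assumes convergent: "\<And>h::('a \<Rightarrow>\<^sub>L real). norm h \<le> 1 \<Longrightarrow> convergent (\<lambda>i. blinfun_apply h (x i))"
  shows "weakly_cauchy x"
  unfolding weakly_cauchy_def
proof
  fix g :: "'a \<Rightarrow>\<^sub>L real"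
  define c where "c = norm g + 1"
  have "c > 0" by (simp add: c_def add_nonneg_pos)
  then have "norm ((1 / c) *\<^sub>R g) \<le> 1" by (simp add: c_def field_simps)
  then have "convergent (\<lambda>i. c * ((1 / c) *\<^sub>R g) (x i))"
    using convergent convergent_mult_const_iff[of c] \<open>c > 0\<close> by simp
  with \<open>c > 0\<close> show "Cauchy (\<lambda>i. g (x i))"
    by (simp add: blinfun.scaleR_left Cauchy_convergent_iff)
qed

theorem weakly_cauchy_subseq_if_not_contains_l1:
  fixes x :: "nat \<Rightarrow> 'a::banach"
  assumes no_l1: "\<not> contains_l1 TYPE('a)" and bounded: "\<And>n. norm (x n) \<le> 1"
  shows "\<exists>r. strict_mono r \<and> weakly_cauchy (x \<circ> r)"
proof -
  define P where "P q L \<longleftrightarrow> (fst q < snd q \<longrightarrow>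
      converges_along (functionals_le x (of_rat (fst q))) (functionals_ge x (of_rat (snd q))) (cball 0 1) L)"
    for q :: "rat \<times> rat" and L
  obtain d :: "nat \<Rightarrow> nat" where d: "strict_mono d" "\<And>q. \<exists>L. P q L \<and> finite (range d - L)"
  proof (rule diagonal_infinite_set[where P = P])
    fix q :: "rat \<times> rat" and L :: "nat set" assume "infinite L"
    show "\<exists>L'\<subseteq>L. infinite L' \<and> P q L'"
    proof (cases "fst q < snd q")
      case True
      then have "of_rat (fst q) < (of_rat (snd q) :: real)" by (simp add: of_rat_less)
      then obtain L' where "L' \<subseteq> L" "infinite L'"
        "converges_along (functionals_le x (of_rat (fst q))) (functionals_ge x (of_rat (snd q)))
           (cball 0 1) L'"
        by (rule converges_along_gap_if_not_contains_l1[OF no_l1 bounded _ \<open>infinite L\<close>])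
      then show ?thesis unfolding P_def by blast
    qed (use \<open>infinite L\<close> in \<open>auto simp: P_def\<close>)
  qed (rule that, assumption+)
  have "convergent (\<lambda>i. h (x (d i)))" if "norm h \<le> 1" for h :: "'a \<Rightarrow>\<^sub>L real"
  proof (rule convergent_if_no_rational_gap)
    show "\<bar>h (x (d i))\<bar> \<le> 1" for i
    proof -
      have "\<bar>h (x (d i))\<bar> \<le> norm h * norm (x (d i))" using norm_blinfun[of h "x (d i)"] by simp
      also have "\<dots> \<le> 1 * 1" using that bounded[of "d i"] by (intro mult_mono) auto
      finally show ?thesis by simp
    qed
  next
    fix q1 q2 :: rat assume "q1 < q2"
    obtain L where "P (q1, q2) L" "finite (range d - L)" using d(2) by blast
    then have "converges_along (functionals_le x (of_rat q1)) (functionals_ge x (of_rat q2))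
        (cball 0 1) (range d)"
      using \<open>q1 < q2\<close> converges_along_almost_subset unfolding P_def by auto
    from converges_along_range[OF this strict_mono_imp_inj_on[OF d(1)]] that
    show "finite {i. h (x (d i)) \<le> of_rat q1} \<or> finite {i. of_rat q2 \<le> h (x (d i))}"
      by (simp add: functionals_le_def functionals_ge_def)
  qed
  then have "weakly_cauchy (x \<circ> d)"
    by (intro weakly_cauchy_if_convergent_on_unit_ball) simp
  with d(1) show ?thesis by blast
qed

lemma weakly_precompact_ball_if_not_contains_l1:
  assumes "\<not> contains_l1 TYPE('a::banach)"
  shows "weakly_precompact (ball (0::'a) 1)"
  unfolding weakly_precompact_def
proof (intro allI impI)
  fix x :: "nat \<Rightarrow> 'a" assume "\<forall>n. x n \<in> ball 0 1"
  then have "norm (x n) \<le> 1" for n by (simp add: less_imp_le)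
  then show "\<exists>r. strict_mono r \<and> weakly_cauchy (x \<circ> r)"
    by (rule weakly_cauchy_subseq_if_not_contains_l1[OF assms])
qed

section \<open>The operators T_f and S_f\<close>

lemma T_op_apply: "blinfun_apply (T_op f a) y = f (a * y)"
  by (simp add: T_op_def dual_lmod_def)

lemma S_op_apply: "blinfun_apply (S_op f a) y = f (y * a)"
  by (simp add: S_op_def dual_rmod_def)

lemma T_op_diff: "T_op f (a - b) = T_op f a - T_op f b"
  by (rule blinfun_eqI) (simp add: T_op_apply blinfun.diff_left blinfun.diff_right left_diff_distrib)

lemma S_op_diff: "S_op f (a - b) = S_op f a - S_op f b"
  by (rule blinfun_eqI) (simp add: S_op_apply blinfun.diff_left blinfun.diff_right right_diff_distrib)

lemma ap_subset_rcc: "(ap :: ('a::real_normed_algebra \<Rightarrow>\<^sub>L real) set) \<subseteq> rcc"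
proof
  fix f :: "'a \<Rightarrow>\<^sub>L real" assume "f \<in> ap"
  then have "L_set (T_op f ` ball 0 1)"
    by (intro L_set_if_compact_closure) (simp add: ap_def compact_op_def)
  then show "f \<in> rcc" unfolding rcc_def mem_Collect_eq
    by (rule completely_continuous_if_L_set_transpose[rotated]) (simp add: T_op_apply S_op_apply)
qed

lemma rcc_subset_lcc:
  assumes "weakly_precompact (ball (0::'a::real_normed_algebra) 1)"
  shows "(rcc :: ('a \<Rightarrow>\<^sub>L real) set) \<subseteq> lcc"
proof
  fix f :: "'a \<Rightarrow>\<^sub>L real" assume "f \<in> rcc"
  then have "compact (closure (S_op f ` ball 0 1))"
    using assms by (intro compact_if_completely_continuous S_op_diff) (simp_all add: rcc_def)
  then have "L_set (S_op f ` ball 0 1)" by (rule L_set_if_compact_closure)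
  then show "f \<in> lcc" unfolding lcc_def mem_Collect_eq
    by (rule completely_continuous_if_L_set_transpose[rotated]) (simp add: T_op_apply S_op_apply)
qed

lemma lcc_subset_ap:
  assumes "weakly_precompact (ball (0::'a::real_normed_algebra) 1)"
  shows "(lcc :: ('a \<Rightarrow>\<^sub>L real) set) \<subseteq> ap"
proof
  fix f :: "'a \<Rightarrow>\<^sub>L real" assume "f \<in> lcc"
  then have "compact (closure (T_op f ` ball 0 1))"
    using assms by (intro compact_if_completely_continuous T_op_diff) (simp_all add: lcc_def)
  then show "f \<in> ap" by (simp add: ap_def compact_op_def)
qed

lemma rcc_subset_wpL: "(rcc :: ('a::real_normed_algebra \<Rightarrow>\<^sub>L real) set) \<subseteq> wpL"
proof
  fix f :: "'a \<Rightarrow>\<^sub>L real" assume "f \<in> rcc"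
  have "L_set (T_op f ` Y)" if Y: "weakly_precompact Y" for Y
  proof -
    obtain M where "M \<ge> 0" "\<forall>a\<in>Y. \<forall>g::('a \<Rightarrow>\<^sub>L real). \<bar>blinfun_apply g a\<bar> \<le> M * norm g"
      using weakly_precompact_uniformly_bounded[OF Y] by blast
    then show ?thesis
      using \<open>f \<in> rcc\<close> by (intro L_set_transpose_image[where Q = "S_op f"])
        (auto simp: rcc_def T_op_apply S_op_apply)
  qed
  then show "f \<in> wpL" by (simp add: wpL_def)
qed

lemma wpL_subset_rcc:
  assumes "weakly_precompact (ball (0::'a::real_normed_algebra) 1)"
  shows "(wpL :: ('a \<Rightarrow>\<^sub>L real) set) \<subseteq> rcc"
proof
  fix f :: "'a \<Rightarrow>\<^sub>L real" assume "f \<in> wpL"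
  then have "L_set (T_op f ` ball 0 1)" using assms by (simp add: wpL_def)
  then show "f \<in> rcc" unfolding rcc_def mem_Collect_eq
    by (rule completely_continuous_if_L_set_transpose[rotated]) (simp add: T_op_apply S_op_apply)
qed

theorem mainTheorem4:
  assumes "\<not> contains_l1 TYPE('a::{real_normed_algebra, banach})"
  shows "(wpL :: ('a \<Rightarrow>\<^sub>L real) set) = cc \<and> (cc :: ('a \<Rightarrow>\<^sub>L real) set) = ap"
proof -
  have ball: "weakly_precompact (ball (0::'a) 1)"
    using assms by (rule weakly_precompact_ball_if_not_contains_l1)
  have ap_rcc: "(ap :: ('a \<Rightarrow>\<^sub>L real) set) \<subseteq> rcc" by (rule ap_subset_rcc)
  have rcc_lcc: "(rcc :: ('a \<Rightarrow>\<^sub>L real) set) \<subseteq> lcc" using ball by (rule rcc_subset_lcc)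
  have lcc_ap: "(lcc :: ('a \<Rightarrow>\<^sub>L real) set) \<subseteq> ap" using ball by (rule lcc_subset_ap)
  have "rcc = (ap :: ('a \<Rightarrow>\<^sub>L real) set)" using rcc_lcc lcc_ap ap_rcc by (intro subset_antisym) auto
  moreover have "lcc = (ap :: ('a \<Rightarrow>\<^sub>L real) set)" using rcc_lcc lcc_ap ap_rcc by (intro subset_antisym) auto
  moreover have "(wpL :: ('a \<Rightarrow>\<^sub>L real) set) = rcc"
    using rcc_subset_wpL wpL_subset_rcc[OF ball] by (rule subset_antisym[rotated])
  ultimately show ?thesis by (simp add: cc_def)
qed

end
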